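(* Let $n\ge 2$ and let $g_1,\dots,g_r\in\mathbb R[X_1,\dots,X_n]$ satisfy $\|g_i\|\le\tfrac12$ for all $i$ and $1-\|\mathbf X\|_2^2\in\mathcal Q_{\ell_0}(\mathbf g)$ for some $\ell_0\in\mathbb N$. Let $\mathfrak c\ge1,\textit{Ł}\ge1$ satisfy $D(x)^{\textit{Ł}}\le \mathfrak c\,G(x)$ on $[-1,1]^n$, and let $\gamma(n,\mathbf g)\ge 1$ be a constant depending only on $n,\mathbf g$ such that every $f\in\mathbb R[\mathbf X]$ with $f^*>0$ lies in $\mathcal Q_\ell(\mathbf g)$ whenever $\ell\ge\gamma(n,\mathbf g)\,d(f)^{3.5n\textit{Ł}}\epsilon(f)^{-2.5n\textit{Ł}}$. Let $0<\epsilon\le\tfrac12$, $t\in\mathbb N$, $t\ge1$, and $\ell\in\mathbb N$ with $$\ell\ge \gamma(n,\mathbf g)\,6^{2.5n\textit{Ł}}\,t^{6n\textit{Ł}}\binom{n+t}{t}^{2.5n\textit{Ł}}\epsilon^{-2.5n\textit{Ł}}\quad\text{and}\quad \ell\ge 2t+\ell_0 .$$ Then $d_H\big(\mathcal M^{(1)}(S)^{[2t]},\ \mathcal L^{(1)}_\ell(\mathbf g)^{[2t]}\big)\le\epsilon$.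
   Context: $\mathbb R[\mathbf X]=\mathbb R[X_1,\dots,X_n]$, $\Sigma^2$ sums of squares, $S=\{x: g_i(x)\ge0\ \forall i\}$ (nonempty), $\mathcal Q_\ell(\mathbf g)=\{s_0+\sum_i s_ig_i: s_j\in\Sigma^2,\deg s_0\le\ell,\deg(s_ig_i)\le\ell\}$, $\|h\|=\max_{[-1,1]^n}|h|$, $\|\mathbf X\|_2^2=\sum X_i^2$, $d(f)=\deg f$, $f^*=\min_S f$, $\epsilon(f)=f^*/\|f\|$, $G(x)=|\min\{g_1(x),\dots,g_r(x),0\}|$, $D(x)=\operatorname{dist}(x,S)$. A linear functional $L$ on $\mathbb R[\mathbf X]_k$ (polynomials of degree $\le k$) is identified with its vector $(L(\mathbf X^\alpha))_{|\alpha|\le k}$, and distances are Euclidean distances between these vectors; $L^{[2t]}$ is the restriction to $\mathbb R[\mathbf X]_{2t}$. $\mathcal M^{(1)}(S)^{[2t]}=\{(\int \mathbf x^\alpha d\mu)_{|\alpha|\le 2t}: \mu$ a Borel probability measure supported on $S\}$. $\mathcal L^{(1)}_\ell(\mathbf g)=\{L\in(\mathbb R[\mathbf X]_\ell)^*: L(q)\ge0\ \forall q\in\mathcal Q_\ell(\mathbf g),\ L(1)=1\}$ and $\mathcal L^{(1)}_\ell(\mathbf g)^{[2t]}$ is the set of restrictions to $\mathbb R[\mathbf X]_{2t}$. $d_H(A,B)=\max\{\sup_{a\in A}\operatorname{dist}(a,B),\sup_{b\in B}\operatorname{dist}(b,A)\}$ is the Hausdorff distance. *)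

theory Defs
  imports "HOL-Probability.Probability" "HOL-Library.Poly_Mapping"
begin

text \<open>Real polynomials in the variables indexed by the finite type 'n (n = CARD('n)):
  finitely supported maps from exponent vectors to coefficients,
  with convolution product (the Poly_Mapping semiring structure).\<close>

type_synonym 'n rpoly = "('n \<Rightarrow>\<^sub>0 nat) \<Rightarrow>\<^sub>0 real"

definition mdeg :: "('n::finite \<Rightarrow>\<^sub>0 nat) \<Rightarrow> nat" where
  "mdeg \<alpha> = (\<Sum>i\<in>UNIV. Poly_Mapping.lookup \<alpha> i)"

definition pdeg :: "'n::finite rpoly \<Rightarrow> nat" where
  "pdeg p = Max (insert 0 (mdeg ` Poly_Mapping.keys p))"

definition mon_eval :: "('n::finite \<Rightarrow>\<^sub>0 nat) \<Rightarrow> real^'n \<Rightarrow> real" where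
  "mon_eval \<alpha> x = (\<Prod>i\<in>UNIV. (x $ i) ^ Poly_Mapping.lookup \<alpha> i)"

definition peval :: "'n::finite rpoly \<Rightarrow> real^'n \<Rightarrow> real" where
  "peval p x = (\<Sum>\<alpha>\<in>Poly_Mapping.keys p. Poly_Mapping.lookup p \<alpha> * mon_eval \<alpha> x)"

definition is_sos :: "'n::finite rpoly \<Rightarrow> bool" where
  "is_sos s \<longleftrightarrow> (\<exists>qs :: 'n rpoly list. s = sum_list (map (\<lambda>q. q * q) qs))"

definition quadmod :: "nat \<Rightarrow> 'n::finite rpoly list \<Rightarrow> 'n rpoly set" where
  "quadmod l gs = {s0 + (\<Sum>i<length gs. s i * gs ! i) | s0 s.
      is_sos s0 \<and> pdeg s0 \<le> l \<and>
      (\<forall>i<length gs. is_sos (s i) \<and> pdeg (s i * gs ! i) \<le> l)}"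

definition semialg :: "'n::finite rpoly list \<Rightarrow> (real^'n) set" where
  "semialg gs = {x. \<forall>g\<in>set gs. peval g x \<ge> 0}"

definition cube :: "(real^'n::finite) set" where
  "cube = {x. \<forall>i. \<bar>x $ i\<bar> \<le> 1}"

definition supnorm :: "'n::finite rpoly \<Rightarrow> real" where
  "supnorm h = (SUP x\<in>cube. \<bar>peval h x\<bar>)"

definition sqnormX :: "'n::finite rpoly" where
  "sqnormX = (\<Sum>i\<in>UNIV. Poly_Mapping.single (Poly_Mapping.single i 2) 1)"

definition Gfun :: "'n::finite rpoly list \<Rightarrow> real^'n \<Rightarrow> real" where
  "Gfun gs x = \<bar>Min (insert 0 ((\<lambda>g. peval g x) ` set gs))\<bar>"

definition Dfun :: "'n::finite rpoly list \<Rightarrow> real^'n \<Rightarrow> real" where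
  "Dfun gs x = infdist x (semialg gs)"

definition fstar :: "'n::finite rpoly list \<Rightarrow> 'n rpoly \<Rightarrow> real" where
  "fstar gs f = (INF x\<in>semialg gs. peval f x)"

definition epsf :: "'n::finite rpoly list \<Rightarrow> 'n rpoly \<Rightarrow> real" where
  "epsf gs f = fstar gs f / supnorm f"

text \<open>Linear functionals / moment vectors are identified with coefficient vectors
  indexed by exponents; they are taken to vanish outside the relevant degree range.\<close>

definition idx :: "nat \<Rightarrow> ('n::finite \<Rightarrow>\<^sub>0 nat) set" where
  "idx k = {\<alpha>. mdeg \<alpha> \<le> k}"

definition truncv :: "nat \<Rightarrow> (('n::finite \<Rightarrow>\<^sub>0 nat) \<Rightarrow> real) \<Rightarrow> ('n \<Rightarrow>\<^sub>0 nat) \<Rightarrow> real" where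
  "truncv k L = (\<lambda>\<alpha>. if mdeg \<alpha> \<le> k then L \<alpha> else 0)"

definition vdist :: "nat \<Rightarrow> (('n::finite \<Rightarrow>\<^sub>0 nat) \<Rightarrow> real) \<Rightarrow> (('n \<Rightarrow>\<^sub>0 nat) \<Rightarrow> real) \<Rightarrow> real" where
  "vdist k u v = sqrt (\<Sum>\<alpha>\<in>idx k. (u \<alpha> - v \<alpha>)\<^sup>2)"

definition apply_fun :: "(('n::finite \<Rightarrow>\<^sub>0 nat) \<Rightarrow> real) \<Rightarrow> 'n rpoly \<Rightarrow> real" where
  "apply_fun L q = (\<Sum>\<alpha>\<in>Poly_Mapping.keys q. Poly_Mapping.lookup q \<alpha> * L \<alpha>)"

definition moments :: "'n::finite rpoly list \<Rightarrow> nat \<Rightarrow> (('n \<Rightarrow>\<^sub>0 nat) \<Rightarrow> real) set" where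
  "moments gs k = {truncv k (\<lambda>\<alpha>. integral\<^sup>L \<mu> (mon_eval \<alpha>)) | \<mu>.
      prob_space \<mu> \<and> sets \<mu> = sets borel \<and> (AE x in \<mu>. x \<in> semialg gs)}"

definition pseudo :: "'n::finite rpoly list \<Rightarrow> nat \<Rightarrow> (('n \<Rightarrow>\<^sub>0 nat) \<Rightarrow> real) set" where
  "pseudo gs l = {L. (\<forall>\<alpha>. \<not> mdeg \<alpha> \<le> l \<longrightarrow> L \<alpha> = 0) \<and>
      (\<forall>q\<in>quadmod l gs. apply_fun L q \<ge> 0) \<and> L 0 = 1}"

text \<open>Hausdorff distance (valued in ereal, so no junk values for unbounded sets)\<close>
definition hausd :: "nat \<Rightarrow> (('n::finite \<Rightarrow>\<^sub>0 nat) \<Rightarrow> real) set \<Rightarrow> (('n \<Rightarrow>\<^sub>0 nat) \<Rightarrow> real) set \<Rightarrow> ereal" where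
  "hausd k A B = max (SUP a\<in>A. INF b\<in>B. ereal (vdist k a b))
                     (SUP b\<in>B. INF a\<in>A. ereal (vdist k b a))"

end

theory Submission
  imports Defs
begin

text \<open>Elements of \<open>Q\<^sub>l(g)\<close> are nonnegative on \<open>S\<close>, so truncated moment vectors of
  probability measures on \<open>S\<close> are pseudo-moments; this is one half of the Hausdorff bound.
  Conversely, if the truncation \<open>b\<close> of a pseudo-moment functional \<open>L\<close> were farther than \<open>\<epsilon>\<close>
  from the moment set, a unit vector \<open>f\<close> would separate \<open>b\<close> with a margin \<open>e > \<epsilon>\<close> from the
  convex set of moment vectors of finitely supported measures on \<open>S\<close>, in particular from all
  point evaluations. The polynomial with coefficient vector \<open>f\<close>, shifted so that its minimum on
  \<open>S\<close> is \<open>\<epsilon>\<close>, has degree at most \<open>2t\<close>; since \<open>S \<subseteq> [-1,1]\<^sup>n\<close> and \<open>f\<close> has at most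
  \<open>C(n+t,t)\<^sup>2\<close> coordinates, its sup-norm is at most \<open>2 C(n+t,t) + 1/2\<close>. The assumed effective
  Putinar bound then puts it into \<open>Q\<^sub>l(g)\<close>, so \<open>L\<close> is nonnegative on it, contradicting \<open>e > \<epsilon>\<close>.\<close>

lemma peval_eq_sum_superset:
  assumes "finite A" "Poly_Mapping.keys p \<subseteq> A"
  shows "peval p x = (\<Sum>\<alpha>\<in>A. Poly_Mapping.lookup p \<alpha> * mon_eval \<alpha> x)"
  unfolding peval_def using assms by (intro sum.mono_neutral_left) (auto simp: in_keys_iff)

lemma apply_fun_eq_sum_superset:
  assumes "finite A" "Poly_Mapping.keys q \<subseteq> A"
  shows "apply_fun L q = (\<Sum>\<alpha>\<in>A. Poly_Mapping.lookup q \<alpha> * L \<alpha>)"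
  unfolding apply_fun_def using assms by (intro sum.mono_neutral_left) (auto simp: in_keys_iff)

lemma peval_zero [simp]: "peval 0 x = 0"
  by (simp add: peval_def)

lemma mon_eval_zero [simp]: "mon_eval 0 x = 1"
  by (simp add: mon_eval_def)

lemma peval_one [simp]: "peval 1 x = 1"
  by (simp add: peval_def)

lemma peval_single [simp]: "peval (Poly_Mapping.single \<alpha> c) x = c * mon_eval \<alpha> x"
  by (simp add: peval_def)

lemma mon_eval_add: "mon_eval (\<alpha> + \<beta>) x = mon_eval \<alpha> x * mon_eval \<beta> x"
  by (simp add: mon_eval_def lookup_add power_add prod.distrib)

lemma peval_add: "peval (p + q) x = peval p x + peval q x"
proof -
  let ?A = "Poly_Mapping.keys p \<union> Poly_Mapping.keys q"
  have "peval (p + q) x = (\<Sum>\<alpha>\<in>?A. Poly_Mapping.lookup (p + q) \<alpha> * mon_eval \<alpha> x)"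
    by (rule peval_eq_sum_superset) (auto simp: keys_add)
  also have "\<dots> = (\<Sum>\<alpha>\<in>?A. Poly_Mapping.lookup p \<alpha> * mon_eval \<alpha> x)
                + (\<Sum>\<alpha>\<in>?A. Poly_Mapping.lookup q \<alpha> * mon_eval \<alpha> x)"
    by (simp add: lookup_add distrib_right sum.distrib)
  also have "\<dots> = peval p x + peval q x"
    by (subst (1 2) peval_eq_sum_superset) auto
  finally show ?thesis .
qed

lemma peval_sum: "peval (\<Sum>i\<in>I. p i) x = (\<Sum>i\<in>I. peval (p i) x)"
  by (induction I rule: infinite_finite_induct) (auto simp: peval_add)

lemma peval_diff: "peval (p - q) x = peval p x - peval q x"
  using peval_add[of "p - q" q x] by simp

lemma poly_mapping_sum_single:
  "p = (\<Sum>\<alpha>\<in>Poly_Mapping.keys p. Poly_Mapping.single \<alpha> (Poly_Mapping.lookup p \<alpha>))"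
  by (rule poly_mapping_eqI) (simp add: lookup_sum lookup_single when_def in_keys_iff)

lemma peval_mult: "peval (p * q) x = peval p x * peval (q :: 'n::finite rpoly) x"
proof -
  have "p * q = (\<Sum>\<alpha>\<in>Poly_Mapping.keys p. \<Sum>\<beta>\<in>Poly_Mapping.keys q.
      Poly_Mapping.single \<alpha> (Poly_Mapping.lookup p \<alpha>) * Poly_Mapping.single \<beta> (Poly_Mapping.lookup q \<beta>))"
    by (subst (1) poly_mapping_sum_single, subst (2) poly_mapping_sum_single) (simp add: sum_product)
  then have "peval (p * q) x = (\<Sum>\<alpha>\<in>Poly_Mapping.keys p. \<Sum>\<beta>\<in>Poly_Mapping.keys q.
      Poly_Mapping.lookup p \<alpha> * mon_eval \<alpha> x * (Poly_Mapping.lookup q \<beta> * mon_eval \<beta> x))"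
    by (simp add: peval_sum mult_single mon_eval_add mult_ac)
  also have "\<dots> = peval p x * peval q x"
    by (simp add: peval_def sum_product)
  finally show ?thesis .
qed

lemma is_sos_peval_nonneg:
  assumes "is_sos s"
  shows "0 \<le> peval s x"
proof -
  obtain qs where "s = sum_list (map (\<lambda>q. q * q) qs)"
    using assms by (auto simp: is_sos_def)
  then show ?thesis
    by (induction qs arbitrary: s) (auto simp: peval_add peval_mult)
qed

lemma quadmod_peval_nonneg:
  assumes "q \<in> quadmod l gs" "x \<in> semialg gs"
  shows "0 \<le> peval q x"
proof -
  obtain s0 s where q: "q = s0 + (\<Sum>i<length gs. s i * gs ! i)" and "is_sos s0"
    and s: "\<forall>i<length gs. is_sos (s i)"
    using assms(1) unfolding quadmod_def by blast
  have "\<forall>i<length gs. 0 \<le> peval (gs ! i) x"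
    using assms(2) by (auto simp: semialg_def)
  then have "\<forall>i<length gs. 0 \<le> peval (s i * gs ! i) x"
    using s by (simp add: peval_mult is_sos_peval_nonneg)
  then show ?thesis
    using \<open>is_sos s0\<close>
    unfolding q peval_add peval_sum
    by (intro add_nonneg_nonneg sum_nonneg is_sos_peval_nonneg[OF \<open>is_sos s0\<close>]) auto
qed

lemma peval_sqnormX: "peval sqnormX x = (\<Sum>i\<in>UNIV. (x $ i)\<^sup>2)"
proof -
  have "mon_eval (Poly_Mapping.single i 2) x = (x $ i)\<^sup>2" for i
    by (simp add: mon_eval_def lookup_single when_def power_0_left if_distrib prod.delta
             cong: if_cong)
  then show ?thesis
    by (simp add: sqnormX_def peval_sum)
qed

lemma semialg_subset_cube:
  assumes "1 - sqnormX \<in> quadmod l0 gs"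
  shows "semialg gs \<subseteq> cube"
proof
  fix x assume "x \<in> semialg gs"
  then have "0 \<le> peval (1 - sqnormX) x"
    by (rule quadmod_peval_nonneg[OF assms])
  then have sum_le: "(\<Sum>i\<in>UNIV. (x $ i)\<^sup>2) \<le> 1"
    by (simp add: peval_diff peval_sqnormX)
  have "\<bar>x $ i\<bar> \<le> 1" for i
  proof -
    have "(x $ i)\<^sup>2 \<le> (\<Sum>i\<in>UNIV. (x $ i)\<^sup>2)"
      by (rule member_le_sum) auto
    then show ?thesis
      using sum_le abs_square_le_1 by fastforce
  qed
  then show "x \<in> cube"
    by (simp add: cube_def)
qed

lemma abs_mon_eval_le_1: "x \<in> cube \<Longrightarrow> \<bar>mon_eval \<alpha> x\<bar> \<le> 1"
  unfolding mon_eval_def cube_def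
  by (auto simp: abs_prod power_abs intro!: prod_le_1 power_le_one)

lemma continuous_on_mon_eval: "continuous_on A (mon_eval \<alpha>)"
  unfolding mon_eval_def by (intro continuous_intros)

lemma borel_measurable_mon_eval: "mon_eval \<alpha> \<in> borel_measurable borel"
  using continuous_on_mon_eval by (rule borel_measurable_continuous_onI)

lemma closed_semialg: "closed (semialg gs)"
proof -
  have "semialg gs = (\<Inter>g\<in>set gs. {x. 0 \<le> peval g x})"
    by (auto simp: semialg_def)
  moreover have "closed {x. 0 \<le> peval g x}" for g
    unfolding peval_def
    by (intro closed_Collect_le continuous_on_const continuous_intros continuous_on_mon_eval)
  ultimately show ?thesis
    by auto
qed

lemma finite_idx: "finite (idx k :: ('n::finite \<Rightarrow>\<^sub>0 nat) set)"
proof -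
  have "Poly_Mapping.lookup ` (idx k :: ('n \<Rightarrow>\<^sub>0 nat) set) \<subseteq> PiE UNIV (\<lambda>_. {..k})"
  proof
    fix f assume "f \<in> Poly_Mapping.lookup ` (idx k :: ('n \<Rightarrow>\<^sub>0 nat) set)"
    then obtain \<alpha> where \<alpha>: "mdeg \<alpha> \<le> k" "f = Poly_Mapping.lookup \<alpha>"
      by (auto simp: idx_def)
    have "Poly_Mapping.lookup \<alpha> i \<le> k" for i
      using \<alpha>(1) member_le_sum[of i UNIV "Poly_Mapping.lookup \<alpha>"] by (simp add: mdeg_def)
    then show "f \<in> PiE UNIV (\<lambda>_. {..k})"
      using \<alpha>(2) by auto
  qed
  then have "finite (Poly_Mapping.lookup ` (idx k :: ('n \<Rightarrow>\<^sub>0 nat) set))"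
    by (rule finite_subset) (simp add: finite_PiE)
  then show ?thesis
    by (rule finite_imageD) (auto intro: inj_onI poly_mapping_eqI)
qed

lemma mdeg_zero [simp]: "mdeg 0 = 0"
  by (simp add: mdeg_def)

lemma keys_subset_idx_iff_pdeg_le: "Poly_Mapping.keys p \<subseteq> idx k \<longleftrightarrow> pdeg p \<le> k"
  unfolding pdeg_def idx_def by (subst Max_le_iff) auto

lemma keys_quadmod_subset_idx:
  assumes "q \<in> quadmod l gs"
  shows "Poly_Mapping.keys q \<subseteq> idx l"
proof -
  obtain s0 s where q: "q = s0 + (\<Sum>i<length gs. s i * gs ! i)" and "pdeg s0 \<le> l"
    and "\<forall>i<length gs. pdeg (s i * gs ! i) \<le> l"
    using assms unfolding quadmod_def by blast
  then have "Poly_Mapping.keys s0 \<subseteq> idx l" "\<forall>i<length gs. Poly_Mapping.keys (s i * gs ! i) \<subseteq> idx l"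
    by (simp_all add: keys_subset_idx_iff_pdeg_le)
  moreover have "Poly_Mapping.keys (\<Sum>i<length gs. s i * gs ! i) \<subseteq> (\<Union>i<length gs. Poly_Mapping.keys (s i * gs ! i))"
    by (rule keys_sum)
  ultimately show ?thesis
    unfolding q using keys_add[of s0] by blast
qed

text \<open>Exponent vectors of degree at most \<open>k\<close> are encoded injectively as multisets of size \<open>k\<close>
  over \<open>'n option\<close>, with \<open>None\<close> padding the degree up to \<open>k\<close>.\<close>
lemma card_idx_le: "card (idx k :: ('n::finite \<Rightarrow>\<^sub>0 nat) set) \<le> (CARD('n) + k) choose k"
proof -
  define M where "M \<alpha> = (\<Sum>i\<in>UNIV. replicate_mset (Poly_Mapping.lookup \<alpha> i) (Some i))
     + replicate_mset (k - mdeg \<alpha>) None" for \<alpha> :: "'n \<Rightarrow>\<^sub>0 nat"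
  have "count (M \<alpha>) (Some i) = Poly_Mapping.lookup \<alpha> i" for \<alpha> i
    by (simp add: M_def count_sum)
  then have "inj M"
    by (metis injI poly_mapping_eqI)
  then have "card (idx k :: ('n \<Rightarrow>\<^sub>0 nat) set) = card (M ` idx k)"
    by (simp add: card_image inj_on_subset)
  also have "\<dots> \<le> card (multisets_of_size (UNIV :: 'n option set) k)"
    by (rule card_mono[OF finite_multisets_of_size])
       (auto simp: multisets_of_size_def M_def idx_def mdeg_def)
  also have "\<dots> = (CARD('n) + k) choose k"
    by (simp add: card_multisets_of_size)
  finally show ?thesis .
qed

lemma binomial_double_le_square: "(n + 2*t) choose n \<le> ((n + t) choose n)\<^sup>2"
proof (induction n)
  case 0
  then show ?case by simp
next
  case (Suc m)
  have e1: "Suc (m + 2*t) * ((m + 2*t) choose m) = ((Suc m + 2*t) choose Suc m) * Suc m"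
    using Suc_times_binomial_eq[of "m + 2*t" m] by simp
  have e2: "Suc (m + t) * ((m + t) choose m) = ((Suc m + t) choose Suc m) * Suc m"
    using Suc_times_binomial_eq[of "m + t" m] by simp
  have "((Suc m + 2*t) choose Suc m) * (Suc m * Suc m)
      = (Suc m * Suc (m + 2*t)) * ((m + 2*t) choose m)"
    by (metis e1 mult.assoc mult.commute)
  also have "\<dots> \<le> (Suc (m + t) * Suc (m + t)) * ((m + t) choose m)\<^sup>2"
    by (rule mult_mono[OF _ Suc.IH]) (simp_all add: algebra_simps)
  also have "\<dots> = ((Suc m + t) choose Suc m)\<^sup>2 * (Suc m * Suc m)"
    by (simp only: power2_eq_square) (metis e2 mult.assoc mult.commute)
  finally show ?case
    by (metis mult_le_cancel2 nat_0_less_mult_iff zero_less_Suc)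
qed

lemma card_idx_double_le: "real (card (idx (2*t) :: ('n::finite \<Rightarrow>\<^sub>0 nat) set)) \<le> (real ((CARD('n) + t) choose t))\<^sup>2"
proof -
  have "card (idx (2*t) :: ('n \<Rightarrow>\<^sub>0 nat) set) \<le> (CARD('n) + 2*t) choose (2*t)"
    by (rule card_idx_le)
  also have "\<dots> = (CARD('n) + 2*t) choose CARD('n)"
    by (subst binomial_symmetric) auto
  also have "\<dots> \<le> ((CARD('n) + t) choose CARD('n))\<^sup>2"
    by (rule binomial_double_le_square)
  also have "\<dots> = ((CARD('n) + t) choose t)\<^sup>2"
    by (subst binomial_symmetric[of t]) auto
  finally show ?thesis
    by (metis of_nat_le_iff of_nat_power)
qed

lemma binomial_ge_Suc: "1 \<le> t \<Longrightarrow> n + 1 \<le> (n + t) choose t"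
proof (induction t rule: dec_induct)
  case base
  then show ?case by simp
next
  case (step s)
  have "(n + Suc s) choose Suc s = ((n + s) choose s) + ((n + s) choose Suc s)"
    by simp
  then show ?case
    using step.IH by linarith
qed

lemma truncv_truncv: "k \<le> l \<Longrightarrow> truncv k (truncv l m) = truncv k m"
  by (auto simp: truncv_def fun_eq_iff)

lemma vdist_self [simp]: "vdist k a a = 0"
  by (simp add: vdist_def)

lemma moment_vector_in_pseudo:
  assumes arch: "1 - sqnormX \<in> quadmod l0 gs"
    and \<mu>: "prob_space \<mu>" "sets \<mu> = sets borel" "AE x in \<mu>. x \<in> semialg gs"
  shows "truncv l (\<lambda>\<alpha>. integral\<^sup>L \<mu> (mon_eval \<alpha>)) \<in> pseudo gs l"
proof -
  interpret prob_space \<mu> by fact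
  have "mon_eval \<alpha> \<in> borel_measurable \<mu>" for \<alpha>
    using borel_measurable_mon_eval measurable_cong_sets[OF \<mu>(2) refl] by blast
  moreover have "AE x in \<mu>. norm (mon_eval \<alpha> x) \<le> 1" for \<alpha>
    using \<mu>(3) by eventually_elim (use semialg_subset_cube[OF arch] in \<open>auto intro: abs_mon_eval_le_1\<close>)
  ultimately have integrable: "integrable \<mu> (mon_eval \<alpha>)" for \<alpha>
    by (intro integrable_const_bound)
  have "0 \<le> apply_fun (truncv l (\<lambda>\<alpha>. integral\<^sup>L \<mu> (mon_eval \<alpha>))) q" if q: "q \<in> quadmod l gs" for q
  proof -
    have "apply_fun (truncv l (\<lambda>\<alpha>. integral\<^sup>L \<mu> (mon_eval \<alpha>))) q
        = (\<Sum>\<alpha>\<in>Poly_Mapping.keys q. Poly_Mapping.lookup q \<alpha> * integral\<^sup>L \<mu> (mon_eval \<alpha>))"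
      unfolding apply_fun_def truncv_def
      using keys_quadmod_subset_idx[OF q] by (intro sum.cong) (auto simp: idx_def)
    also have "\<dots> = integral\<^sup>L \<mu> (peval q)"
      unfolding peval_def using integrable by simp
    also have "0 \<le> integral\<^sup>L \<mu> (peval q)"
      using \<mu>(3) by (intro integral_nonneg_AE) (auto elim!: eventually_mono intro: quadmod_peval_nonneg[OF q])
    finally show ?thesis .
  qed
  then show ?thesis
    by (auto simp: pseudo_def truncv_def prob_space mon_eval_zero[abs_def])
qed

lemma moments_subset_truncv_pseudo:
  assumes "1 - sqnormX \<in> quadmod l0 gs" "k \<le> l"
  shows "moments gs k \<subseteq> truncv k ` pseudo gs l"
proof
  fix a assume "a \<in> moments gs k"
  then obtain \<mu> where a: "a = truncv k (\<lambda>\<alpha>. integral\<^sup>L \<mu> (mon_eval \<alpha>))"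
    and \<mu>: "prob_space \<mu>" "sets \<mu> = sets borel" "AE x in \<mu>. x \<in> semialg gs"
    unfolding moments_def by blast
  then show "a \<in> truncv k ` pseudo gs l"
    using moment_vector_in_pseudo[OF assms(1) \<mu>, of l] truncv_truncv[OF assms(2)] by (metis image_eqI)
qed

lemma excess_moments_truncv_pseudo_le_0:
  assumes "1 - sqnormX \<in> quadmod l0 gs" "k \<le> l"
  shows "(SUP a\<in>moments gs k. INF b\<in>truncv k ` pseudo gs l. ereal (vdist k a b)) \<le> 0"
proof (rule SUP_least)
  fix a assume "a \<in> moments gs k"
  then have "a \<in> truncv k ` pseudo gs l"
    using moments_subset_truncv_pseudo[OF assms] by blast
  then show "(INF b\<in>truncv k ` pseudo gs l. ereal (vdist k a b)) \<le> 0"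
    by (metis INF_lower vdist_self zero_ereal_def)
qed

text \<open>Moment vectors of the finitely supported probability measures on \<open>S\<close>. Unlike
  \<^const>\<open>moments\<close>, this set is obviously convex, which the separation argument needs.\<close>
definition mixture_moments :: "(real^'n) set \<Rightarrow> (('n::finite \<Rightarrow>\<^sub>0 nat) \<Rightarrow> real) set" where
  "mixture_moments S = {(\<lambda>\<alpha>. \<Sum>x\<in>F. w x * mon_eval \<alpha> x) | F w.
     finite F \<and> F \<subseteq> S \<and> (\<forall>x. 0 \<le> w x) \<and> (\<forall>x. x \<notin> F \<longrightarrow> w x = 0) \<and> sum w F = 1}"

lemma mon_eval_in_mixture_moments: "x \<in> S \<Longrightarrow> (\<lambda>\<alpha>. mon_eval \<alpha> x) \<in> mixture_moments S"
  unfolding mixture_moments_def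
  by (intro CollectI exI[of _ "{x}"] exI[of _ "\<lambda>y. if y = x then 1 else 0"]) auto

lemma mixture_moments_convex:
  assumes "k1 \<in> mixture_moments S" "k2 \<in> mixture_moments S" "0 \<le> s" "s \<le> 1"
  shows "(\<lambda>\<alpha>. k1 \<alpha> + s * (k2 \<alpha> - k1 \<alpha>)) \<in> mixture_moments S"
proof -
  obtain F1 w1 where k1: "k1 = (\<lambda>\<alpha>. \<Sum>x\<in>F1. w1 x * mon_eval \<alpha> x)" and "finite F1" "F1 \<subseteq> S"
      "\<forall>x. 0 \<le> w1 x" "\<forall>x. x \<notin> F1 \<longrightarrow> w1 x = 0" "sum w1 F1 = 1"
    using assms(1) unfolding mixture_moments_def by blast
  obtain F2 w2 where k2: "k2 = (\<lambda>\<alpha>. \<Sum>x\<in>F2. w2 x * mon_eval \<alpha> x)" and "finite F2" "F2 \<subseteq> S"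
      "\<forall>x. 0 \<le> w2 x" "\<forall>x. x \<notin> F2 \<longrightarrow> w2 x = 0" "sum w2 F2 = 1"
    using assms(2) unfolding mixture_moments_def by blast
  define w where "w x = (1 - s) * w1 x + s * w2 x" for x
  have extend: "(\<Sum>x\<in>F1 \<union> F2. w1 x * g x) = (\<Sum>x\<in>F1. w1 x * g x)"
    "(\<Sum>x\<in>F1 \<union> F2. w2 x * g x) = (\<Sum>x\<in>F2. w2 x * g x)" for g :: "real^'a \<Rightarrow> real"
    using \<open>finite F1\<close> \<open>finite F2\<close> \<open>\<forall>x. x \<notin> F1 \<longrightarrow> w1 x = 0\<close> \<open>\<forall>x. x \<notin> F2 \<longrightarrow> w2 x = 0\<close>
    by (auto intro!: sum.mono_neutral_right)
  have combine: "(\<Sum>x\<in>F1 \<union> F2. w x * g x)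
      = (1 - s) * (\<Sum>x\<in>F1. w1 x * g x) + s * (\<Sum>x\<in>F2. w2 x * g x)" for g
  proof -
    have "(\<Sum>x\<in>F1 \<union> F2. w x * g x)
        = (1 - s) * (\<Sum>x\<in>F1 \<union> F2. w1 x * g x) + s * (\<Sum>x\<in>F1 \<union> F2. w2 x * g x)"
      unfolding w_def by (simp add: sum_distrib_left distrib_right mult.assoc flip: sum.distrib)
    then show ?thesis
      by (simp only: extend)
  qed
  show ?thesis
    unfolding mixture_moments_def
  proof (intro CollectI exI conjI)
    show "(\<lambda>\<alpha>. k1 \<alpha> + s * (k2 \<alpha> - k1 \<alpha>)) = (\<lambda>\<alpha>. \<Sum>x\<in>F1 \<union> F2. w x * mon_eval \<alpha> x)"
      by (simp add: k1 k2 combine algebra_simps)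
    show "sum w (F1 \<union> F2) = 1"
      using combine[of "\<lambda>_. 1"] \<open>sum w1 F1 = 1\<close> \<open>sum w2 F2 = 1\<close> by simp
  qed (use assms(3,4) \<open>finite F1\<close> \<open>finite F2\<close> \<open>F1 \<subseteq> S\<close> \<open>F2 \<subseteq> S\<close> \<open>\<forall>x. 0 \<le> w1 x\<close> \<open>\<forall>x. 0 \<le> w2 x\<close>
         \<open>\<forall>x. x \<notin> F1 \<longrightarrow> w1 x = 0\<close> \<open>\<forall>x. x \<notin> F2 \<longrightarrow> w2 x = 0\<close> in \<open>auto simp: w_def\<close>)
qed

lemma abs_mixture_moments_le_1:
  assumes "S \<subseteq> cube" "k \<in> mixture_moments S"
  shows "\<bar>k \<alpha>\<bar> \<le> 1"
proof -
  obtain F w where k: "k = (\<lambda>\<alpha>. \<Sum>x\<in>F. w x * mon_eval \<alpha> x)" and "F \<subseteq> S"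
      "\<forall>x. 0 \<le> w x" "sum w F = 1"
    using assms(2) unfolding mixture_moments_def by blast
  have "\<bar>k \<alpha>\<bar> \<le> (\<Sum>x\<in>F. w x * \<bar>mon_eval \<alpha> x\<bar>)"
    unfolding k using \<open>\<forall>x. 0 \<le> w x\<close> by (metis (no_types, lifting) abs_mult abs_of_nonneg sum_abs sum.cong)
  also have "\<dots> \<le> (\<Sum>x\<in>F. w x)"
    using \<open>F \<subseteq> S\<close> assms(1) \<open>\<forall>x. 0 \<le> w x\<close>
    by (intro sum_mono mult_right_le_one_le abs_mon_eval_le_1) auto
  finally show ?thesis
    using \<open>sum w F = 1\<close> by simp
qed

lemma mixture_moments_truncv_in_moments:
  assumes "k \<in> mixture_moments (semialg gs)"
  shows "truncv j k \<in> moments gs j"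
proof -
  obtain F w where k: "k = (\<lambda>\<alpha>. \<Sum>x\<in>F. w x * mon_eval \<alpha> x)" and F: "finite F" "F \<subseteq> semialg gs"
      and w: "\<forall>x. 0 \<le> w x" "\<forall>x. x \<notin> F \<longrightarrow> w x = 0" "sum w F = 1"
    using assms unfolding mixture_moments_def by blast
  have "(\<integral>\<^sup>+x. ennreal (w x) \<partial>count_space UNIV) = (\<Sum>x\<in>F. ennreal (w x))"
    using F w by (intro nn_integral_count_space') auto
  also have "\<dots> = 1"
    using w by (subst sum_ennreal) auto
  finally have total: "(\<integral>\<^sup>+x. ennreal (w x) \<partial>count_space UNIV) = 1" .
  define p where "p = embed_pmf w"
  have pmf_p: "pmf p x = w x" for x
    unfolding p_def using w total by (intro pmf_embed_pmf) auto
  have set_p: "set_pmf p \<subseteq> F"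
    using w by (auto simp: set_pmf_iff pmf_p)
  define \<mu> where "\<mu> = distr (measure_pmf p) borel (\<lambda>x. x)"
  have "prob_space \<mu>"
    unfolding \<mu>_def by (intro prob_space.prob_space_distr prob_space_measure_pmf) simp
  moreover have "sets \<mu> = sets borel"
    by (simp add: \<mu>_def)
  moreover have "AE x in \<mu>. x \<in> semialg gs"
    unfolding \<mu>_def using closed_semialg[of gs] set_p F
    by (subst AE_distr_iff) (auto simp: AE_measure_pmf_iff)
  moreover have "integral\<^sup>L \<mu> (mon_eval \<alpha>) = k \<alpha>" for \<alpha>
  proof -
    have "integral\<^sup>L \<mu> (mon_eval \<alpha>) = integral\<^sup>L (measure_pmf p) (mon_eval \<alpha>)"
      unfolding \<mu>_def using borel_measurable_mon_eval by (subst integral_distr) auto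
    also have "\<dots> = (\<Sum>x\<in>F. pmf p x *\<^sub>R mon_eval \<alpha> x)"
      using F set_p by (intro integral_measure_pmf) auto
    finally show ?thesis
      by (simp add: k pmf_p)
  qed
  ultimately show ?thesis
    unfolding moments_def by (intro CollectI exI[of _ \<mu>]) (simp add: fun_eq_iff)
qed

lemma near_minimizer_inner_gt:
  fixes K :: "('a \<Rightarrow> real) set" and I :: "'a set"
  assumes convex: "\<And>k1 k2 s. k1 \<in> K \<Longrightarrow> k2 \<in> K \<Longrightarrow> 0 \<le> s \<Longrightarrow> s \<le> 1 \<Longrightarrow>
      (\<lambda>\<alpha>. k1 \<alpha> + s * (k2 \<alpha> - k1 \<alpha>)) \<in> K"
    and bounded: "\<And>k. k \<in> K \<Longrightarrow> (\<Sum>\<alpha>\<in>I. (k \<alpha>)\<^sup>2) \<le> R"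
    and k0: "k0 \<in> K" and s: "0 < s" "s \<le> 1"
    and near: "\<And>k. k \<in> K \<Longrightarrow> (\<Sum>\<alpha>\<in>I. (k0 \<alpha> - b \<alpha>)\<^sup>2) < (\<Sum>\<alpha>\<in>I. (k \<alpha> - b \<alpha>)\<^sup>2) + s\<^sup>2"
    and k: "k \<in> K"
  shows "(\<Sum>\<alpha>\<in>I. (k0 \<alpha> - b \<alpha>)\<^sup>2) - s * (1/2 + 2 * R) < (\<Sum>\<alpha>\<in>I. (k0 \<alpha> - b \<alpha>) * (k \<alpha> - b \<alpha>))"
proof -
  define F where "F \<alpha> = k0 \<alpha> - b \<alpha>" for \<alpha>
  define D where "D \<alpha> = k \<alpha> - k0 \<alpha>" for \<alpha>
  have "(\<Sum>\<alpha>\<in>I. (F \<alpha>)\<^sup>2) < (\<Sum>\<alpha>\<in>I. (F \<alpha> + s * D \<alpha>)\<^sup>2) + s\<^sup>2"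
    using near[OF convex[OF k0 k]] s by (simp add: F_def D_def algebra_simps)
  also have "(\<Sum>\<alpha>\<in>I. (F \<alpha> + s * D \<alpha>)\<^sup>2)
      = (\<Sum>\<alpha>\<in>I. (F \<alpha>)\<^sup>2) + 2 * s * (\<Sum>\<alpha>\<in>I. F \<alpha> * D \<alpha>) + s\<^sup>2 * (\<Sum>\<alpha>\<in>I. (D \<alpha>)\<^sup>2)"
    by (simp add: power2_sum power_mult_distrib sum.distrib sum_distrib_left algebra_simps)
  finally have lower: "- (s * (s * (1 + (\<Sum>\<alpha>\<in>I. (D \<alpha>)\<^sup>2)))) < s * (2 * (\<Sum>\<alpha>\<in>I. F \<alpha> * D \<alpha>))"
    by (simp add: power2_eq_square algebra_simps)
  have "(\<Sum>\<alpha>\<in>I. (D \<alpha>)\<^sup>2) \<le> 4 * R"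
  proof -
    have "(D \<alpha>)\<^sup>2 \<le> 2 * (k \<alpha>)\<^sup>2 + 2 * (k0 \<alpha>)\<^sup>2" for \<alpha>
      using sum_power2_ge_zero[of "k \<alpha> + k0 \<alpha>" 0] by (simp add: D_def power2_eq_square algebra_simps)
    then have "(\<Sum>\<alpha>\<in>I. (D \<alpha>)\<^sup>2) \<le> (\<Sum>\<alpha>\<in>I. 2 * (k \<alpha>)\<^sup>2 + 2 * (k0 \<alpha>)\<^sup>2)"
      by (rule sum_mono)
    also have "\<dots> = 2 * (\<Sum>\<alpha>\<in>I. (k \<alpha>)\<^sup>2) + 2 * (\<Sum>\<alpha>\<in>I. (k0 \<alpha>)\<^sup>2)"
      by (simp add: sum.distrib sum_distrib_left)
    finally show ?thesis
      using bounded[OF k] bounded[OF k0] by linarith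
  qed
  then have "s * (s * (1 + (\<Sum>\<alpha>\<in>I. (D \<alpha>)\<^sup>2))) \<le> s * (s * (1 + 4 * R))"
    using s by (intro mult_left_mono) auto
  with lower have "s * (- (s * (1 + 4 * R))) < s * (2 * (\<Sum>\<alpha>\<in>I. F \<alpha> * D \<alpha>))"
    by linarith
  then have "- (s * (1 + 4 * R)) < 2 * (\<Sum>\<alpha>\<in>I. F \<alpha> * D \<alpha>)"
    using s(1) by (simp only: mult_less_cancel_left_pos)
  then have "- (s * (1/2 + 2 * R)) < (\<Sum>\<alpha>\<in>I. F \<alpha> * D \<alpha>)"
    by (simp add: algebra_simps)
  moreover have "(\<Sum>\<alpha>\<in>I. F \<alpha> * (k \<alpha> - b \<alpha>)) = (\<Sum>\<alpha>\<in>I. F \<alpha> * D \<alpha>) + (\<Sum>\<alpha>\<in>I. (F \<alpha>)\<^sup>2)"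
    by (simp add: F_def D_def power2_eq_square algebra_simps flip: sum.distrib)
  ultimately show ?thesis
    by (simp add: F_def)
qed

lemma exists_near_minimizer:
  fixes g :: "'a \<Rightarrow> real"
  assumes "K \<noteq> {}" "\<And>k. k \<in> K \<Longrightarrow> 0 \<le> g k" "0 < \<delta>"
  obtains k0 where "k0 \<in> K" "\<And>k. k \<in> K \<Longrightarrow> g k0 < g k + \<delta>"
proof -
  have bdd: "bdd_below (g ` K)"
    using assms(2) by (intro bdd_belowI2[of _ 0])
  have "(INF k\<in>K. g k) < (INF k\<in>K. g k) + \<delta>"
    using assms(3) by simp
  then obtain k0 where "k0 \<in> K" "g k0 < (INF k\<in>K. g k) + \<delta>"
    unfolding cINF_less_iff[OF assms(1) bdd] by blast
  moreover have "(INF k\<in>K. g k) \<le> g k" if "k \<in> K" for k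
    using bdd that by (rule cINF_lower)
  ultimately show ?thesis
    using that by force
qed

text \<open>Separation from a convex set that need not be closed: a near-minimiser \<open>k0\<close> of the
  distance to \<open>b\<close> replaces the exact projection, at a cost \<open>s (1/2 + 2R)\<close> that is made smaller
  than \<open>d (d - e)\<close>.\<close>
lemma convex_separation:
  fixes K :: "('a \<Rightarrow> real) set" and I :: "'a set"
  assumes "K \<noteq> {}"
    and convex: "\<And>k1 k2 s. k1 \<in> K \<Longrightarrow> k2 \<in> K \<Longrightarrow> 0 \<le> s \<Longrightarrow> s \<le> 1 \<Longrightarrow>
      (\<lambda>\<alpha>. k1 \<alpha> + s * (k2 \<alpha> - k1 \<alpha>)) \<in> K"
    and bounded: "\<And>k. k \<in> K \<Longrightarrow> (\<Sum>\<alpha>\<in>I. (k \<alpha>)\<^sup>2) \<le> R"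
    and far: "\<And>k. k \<in> K \<Longrightarrow> d \<le> sqrt (\<Sum>\<alpha>\<in>I. (k \<alpha> - b \<alpha>)\<^sup>2)"
    and e: "0 < e" "e < d"
  obtains f where "(\<Sum>\<alpha>\<in>I. (f \<alpha>)\<^sup>2) = 1"
    and "\<And>k. k \<in> K \<Longrightarrow> (\<Sum>\<alpha>\<in>I. f \<alpha> * b \<alpha>) + e \<le> (\<Sum>\<alpha>\<in>I. f \<alpha> * k \<alpha>)"
proof -
  define dist2 where "dist2 k = (\<Sum>\<alpha>\<in>I. (k \<alpha> - b \<alpha>)\<^sup>2)" for k
  obtain k1 where "k1 \<in> K"
    using \<open>K \<noteq> {}\<close> by blast
  then have "0 \<le> R"
    using bounded[of k1] sum_nonneg[of I "\<lambda>\<alpha>. (k1 \<alpha>)\<^sup>2"] by simp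
  define c where "c = 1/2 + 2 * R"
  define s where "s = min 1 ((d - e) * d / c)"
  have c: "0 < c"
    using \<open>0 \<le> R\<close> by (simp add: c_def)
  have "0 < (d - e) * d / c"
    using e c by simp
  moreover have "s \<le> (d - e) * d / c"
    by (simp add: s_def)
  ultimately have s: "0 < s" "s \<le> 1" "s * c \<le> (d - e) * d"
    using c by (simp_all add: s_def le_divide_eq)
  obtain k0 where k0: "k0 \<in> K" and near: "\<And>k. k \<in> K \<Longrightarrow> dist2 k0 < dist2 k + s\<^sup>2"
    using exists_near_minimizer[of K dist2 "s\<^sup>2"] \<open>K \<noteq> {}\<close> s(1) by (auto simp: dist2_def sum_nonneg)
  define r where "r = sqrt (dist2 k0)"
  have "d \<le> r"
    using far[OF k0] by (simp add: r_def dist2_def)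
  moreover have "r * r = dist2 k0"
    by (simp add: r_def dist2_def sum_nonneg)
  ultimately have r: "d \<le> r" "0 < r" "r * r = dist2 k0"
    using e by auto
  define f where "f \<alpha> = (k0 \<alpha> - b \<alpha>) / r" for \<alpha>
  show ?thesis
  proof (rule that)
    have "(\<Sum>\<alpha>\<in>I. (f \<alpha>)\<^sup>2) = dist2 k0 / (r * r)"
      by (simp add: f_def power_divide dist2_def power2_eq_square sum_divide_distrib)
    then show "(\<Sum>\<alpha>\<in>I. (f \<alpha>)\<^sup>2) = 1"
      using r(2) by (simp flip: r(3))
  next
    fix k assume "k \<in> K"
    have "dist2 k0 - s * c < (\<Sum>\<alpha>\<in>I. (k0 \<alpha> - b \<alpha>) * (k \<alpha> - b \<alpha>))"
      unfolding c_def dist2_def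
      using convex bounded k0 s(1,2) near[unfolded dist2_def] \<open>k \<in> K\<close>
      by (rule near_minimizer_inner_gt)
    then have "r * r - s * c < (\<Sum>\<alpha>\<in>I. (k0 \<alpha> - b \<alpha>) * (k \<alpha> - b \<alpha>))"
      by (simp add: r(3))
    moreover have "(\<Sum>\<alpha>\<in>I. f \<alpha> * (k \<alpha> - b \<alpha>)) = (\<Sum>\<alpha>\<in>I. (k0 \<alpha> - b \<alpha>) * (k \<alpha> - b \<alpha>)) / r"
      by (simp add: f_def sum_divide_distrib)
    moreover have "r - s * c / r = (r * r - s * c) / r"
      using r(2) by (simp add: diff_divide_distrib)
    ultimately have "r - s * c / r < (\<Sum>\<alpha>\<in>I. f \<alpha> * (k \<alpha> - b \<alpha>))"
      using r by (simp add: divide_strict_right_mono)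
    moreover have "s * c / r \<le> d - e"
    proof -
      have "s * c / r \<le> s * c / d"
        using r s c e by (intro divide_left_mono) auto
      also have "\<dots> \<le> d - e"
        using s(3) e by (simp add: divide_le_eq)
      finally show ?thesis .
    qed
    moreover have "(\<Sum>\<alpha>\<in>I. f \<alpha> * (k \<alpha> - b \<alpha>)) = (\<Sum>\<alpha>\<in>I. f \<alpha> * k \<alpha>) - (\<Sum>\<alpha>\<in>I. f \<alpha> * b \<alpha>)"
      by (simp add: right_diff_distrib sum_subtractf)
    ultimately show "(\<Sum>\<alpha>\<in>I. f \<alpha> * b \<alpha>) + e \<le> (\<Sum>\<alpha>\<in>I. f \<alpha> * k \<alpha>)"
      using r by linarith
  qed
qed

lemma far_from_moments_separated:
  fixes gs :: "'n::finite rpoly list" and b :: "('n \<Rightarrow>\<^sub>0 nat) \<Rightarrow> real"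
  assumes "semialg gs \<noteq> {}" "semialg gs \<subseteq> cube" "0 \<le> \<epsilon>"
    and far: "ereal \<epsilon> < (INF a\<in>moments gs k. ereal (vdist k b a))"
  obtains f e where "\<epsilon> < e" "(\<Sum>\<alpha>\<in>idx k. (f \<alpha>)\<^sup>2) = 1"
    and "\<And>x. x \<in> semialg gs \<Longrightarrow> (\<Sum>\<alpha>\<in>idx k. f \<alpha> * b \<alpha>) + e \<le> (\<Sum>\<alpha>\<in>idx k. f \<alpha> * mon_eval \<alpha> x)"
proof -
  define K where "K = mixture_moments (semialg gs)"
  obtain d where "ereal \<epsilon> < ereal d" and d: "ereal d < (INF a\<in>moments gs k. ereal (vdist k b a))"
    using far ereal_dense2 by blast
  then have "\<epsilon> < d"
    by simp
  have far_K: "d \<le> sqrt (\<Sum>\<alpha>\<in>idx k. (m \<alpha> - b \<alpha>)\<^sup>2)" if "m \<in> K" for m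
  proof -
    have "truncv k m \<in> moments gs k"
      using that unfolding K_def by (rule mixture_moments_truncv_in_moments)
    then have "ereal d < ereal (vdist k b (truncv k m))"
      using d by (meson INF_lower less_le_trans)
    moreover have "vdist k b (truncv k m) = sqrt (\<Sum>\<alpha>\<in>idx k. (m \<alpha> - b \<alpha>)\<^sup>2)"
      unfolding vdist_def truncv_def
      by (intro arg_cong[where f = sqrt] sum.cong refl) (simp add: idx_def power2_commute[of "b _"])
    ultimately show ?thesis
      by simp
  qed
  have bounded_K: "(\<Sum>\<alpha>\<in>idx k. (m \<alpha>)\<^sup>2) \<le> real (card (idx k :: ('n \<Rightarrow>\<^sub>0 nat) set))" if "m \<in> K" for m
  proof -
    have "(m \<alpha>)\<^sup>2 \<le> 1" for \<alpha>
      using abs_mixture_moments_le_1[OF assms(2)] that by (simp add: K_def abs_square_le_1)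
    then show ?thesis
      using sum_mono[of "idx k" "\<lambda>\<alpha>. (m \<alpha>)\<^sup>2" "\<lambda>_. 1"] by simp
  qed
  have dirac: "(\<lambda>\<alpha>. mon_eval \<alpha> x) \<in> K" if "x \<in> semialg gs" for x
    unfolding K_def using that by (rule mon_eval_in_mixture_moments)
  then have "K \<noteq> {}"
    using assms(1) by blast
  have convex_K: "(\<lambda>\<alpha>. k1 \<alpha> + s * (k2 \<alpha> - k1 \<alpha>)) \<in> K"
    if "k1 \<in> K" "k2 \<in> K" "0 \<le> s" "s \<le> 1" for k1 k2 s
    using that unfolding K_def by (rule mixture_moments_convex)
  have e: "0 < (\<epsilon> + d) / 2" "(\<epsilon> + d) / 2 < d"
    using \<open>\<epsilon> < d\<close> \<open>0 \<le> \<epsilon>\<close> by auto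
  obtain f where "(\<Sum>\<alpha>\<in>idx k. (f \<alpha>)\<^sup>2) = 1"
    and f: "\<And>m. m \<in> K \<Longrightarrow> (\<Sum>\<alpha>\<in>idx k. f \<alpha> * b \<alpha>) + (\<epsilon> + d) / 2 \<le> (\<Sum>\<alpha>\<in>idx k. f \<alpha> * m \<alpha>)"
    using convex_separation[where K = K and I = "idx k" and b = b and d = d and e = "(\<epsilon> + d) / 2"]
      \<open>K \<noteq> {}\<close> convex_K bounded_K far_K e by blast
  show ?thesis
  proof (rule that)
    show "\<epsilon> < (\<epsilon> + d) / 2"
      using \<open>\<epsilon> < d\<close> by simp
  qed (use \<open>(\<Sum>\<alpha>\<in>idx k. (f \<alpha>)\<^sup>2) = 1\<close> f[OF dirac] in auto)
qed

lemma exists_poly_with_coeffs: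
  assumes "finite I"
  obtains p :: "'n::finite rpoly"
  where "Poly_Mapping.keys p \<subseteq> I"
    and "\<And>x. peval p x = (\<Sum>\<alpha>\<in>I. c \<alpha> * mon_eval \<alpha> x)"
    and "\<And>L. apply_fun L p = (\<Sum>\<alpha>\<in>I. c \<alpha> * L \<alpha>)"
proof
  define p :: "'n rpoly" where "p = Abs_poly_mapping (\<lambda>\<alpha>. if \<alpha> \<in> I then c \<alpha> else 0)"
  have lookup_p: "Poly_Mapping.lookup p = (\<lambda>\<alpha>. if \<alpha> \<in> I then c \<alpha> else 0)"
    unfolding p_def using assms
    by (intro lookup_Abs_poly_mapping) (auto intro: finite_subset[OF _ assms] split: if_splits)
  show keys: "Poly_Mapping.keys p \<subseteq> I"
    by (auto simp: in_keys_iff lookup_p split: if_splits)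
  show "peval p x = (\<Sum>\<alpha>\<in>I. c \<alpha> * mon_eval \<alpha> x)" for x
    using peval_eq_sum_superset[OF assms keys] by (simp add: lookup_p)
  show "apply_fun L p = (\<Sum>\<alpha>\<in>I. c \<alpha> * L \<alpha>)" for L
    using apply_fun_eq_sum_superset[OF assms keys] by (simp add: lookup_p)
qed

lemma abs_sum_coeffs_mon_eval_le:
  assumes "finite I" "(\<Sum>\<alpha>\<in>I. (c \<alpha>)\<^sup>2) \<le> 1" "x \<in> cube"
  shows "\<bar>\<Sum>\<alpha>\<in>I. c \<alpha> * mon_eval \<alpha> x\<bar> \<le> sqrt (card I)"
proof -
  have "\<bar>\<Sum>\<alpha>\<in>I. c \<alpha> * mon_eval \<alpha> x\<bar> \<le> (\<Sum>\<alpha>\<in>I. \<bar>c \<alpha>\<bar> * \<bar>1\<bar>)"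
    using abs_mon_eval_le_1[OF assms(3)]
    by (auto simp: abs_mult intro!: order.trans[OF sum_abs] sum_mono mult_left_le)
  also have "\<dots> \<le> L2_set c I * L2_set (\<lambda>_. 1) I"
    by (rule L2_set_mult_ineq)
  also have "\<dots> = sqrt (\<Sum>\<alpha>\<in>I. (c \<alpha>)\<^sup>2) * sqrt (card I)"
    by (simp add: L2_set_def L2_set_constant)
  also have "\<dots> \<le> sqrt (card I)"
    using assms(2) by (intro mult_left_le_one_le) (auto simp: sum_nonneg)
  finally show ?thesis .
qed

lemma epsf_ge:
  assumes "semialg gs \<subseteq> cube" "semialg gs \<noteq> {}" "0 < \<epsilon>" "\<epsilon> \<le> fstar gs h"
    and bound: "\<And>x. x \<in> cube \<Longrightarrow> \<bar>peval h x\<bar> \<le> U"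
  shows "\<epsilon> / U \<le> epsf gs h"
proof -
  obtain x0 where x0: "x0 \<in> semialg gs" "x0 \<in> cube"
    using assms(1,2) by blast
  have "bdd_below (peval h ` semialg gs)"
    using assms(1) bound by (intro bdd_belowI2[of _ "-U"]) (fastforce simp: abs_le_iff)
  then have "fstar gs h \<le> \<bar>peval h x0\<bar>"
    unfolding fstar_def using x0(1) by (meson abs_ge_self cINF_lower order_trans)
  also have "\<dots> \<le> supnorm h"
    unfolding supnorm_def using bound x0(2) by (intro cSUP_upper bdd_aboveI2) auto
  finally have "fstar gs h \<le> supnorm h" .
  moreover have "supnorm h \<le> U"
    unfolding supnorm_def using bound x0(2) by (intro cSUP_least) auto
  ultimately have "\<epsilon> / U \<le> \<epsilon> / supnorm h" "\<epsilon> / supnorm h \<le> fstar gs h / supnorm h"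
    using assms(3,4) by (auto intro: divide_left_mono divide_right_mono)
  then show ?thesis
    by (simp add: epsf_def)
qed

lemma pow7_mult_pow5_le:
  fixes t B :: real
  assumes t: "1 \<le> t" and B: "3 \<le> B"
  shows "(2 * t) ^ 7 * (2 * B + 1/2) ^ 5 \<le> 6 ^ 5 * (t ^ 12 * B ^ 5)"
proof -
  have "(2 * B + 1/2) ^ 5 \<le> (13/6 * B) ^ 5"
    using B by (intro power_mono) auto
  moreover have "t ^ 7 \<le> t ^ 12"
    using t by (intro power_increasing) auto
  ultimately have "t ^ 7 * (2 * B + 1/2) ^ 5 \<le> t ^ 12 * (13/6 * B) ^ 5"
    using t B by (intro mult_mono) auto
  then have "(2 * t) ^ 7 * (2 * B + 1/2) ^ 5 \<le> 2 ^ 7 * (t ^ 12 * (13/6 * B) ^ 5)"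
    by (simp add: power_mult_distrib)
  also have "\<dots> = (2 ^ 7 * (13/6) ^ 5) * (t ^ 12 * B ^ 5)"
    by (simp only: power_mult_distrib mult_ac)
  also have "\<dots> \<le> 6 ^ 5 * (t ^ 12 * B ^ 5)"
    using t B by (intro mult_right_mono) (auto simp: power_divide)
  finally show ?thesis .
qed

lemma putinar_degree_bound_le:
  fixes N LL \<gamma> \<epsilon> t B d E :: real
  assumes NL: "0 < N" "0 < LL" and \<gamma>: "0 \<le> \<gamma>" and \<epsilon>: "0 < \<epsilon>" and t: "1 \<le> t" and B: "3 \<le> B"
    and d: "0 \<le> d" "d \<le> 2 * t" and E: "\<epsilon> / (2 * B + 1/2) \<le> E"
  shows "\<gamma> * d powr (7/2 * N * LL) * E powr (-(5/2) * N * LL)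
    \<le> \<gamma> * 6 powr (5/2 * N * LL) * t powr (6 * N * LL) * B powr (5/2 * N * LL) * \<epsilon> powr (-(5/2) * N * LL)"
proof -
  define a where "a = N * LL"
  have a: "0 < a"
    using NL by (simp add: a_def)
  have key: "(2 * t) ^ 7 * (2 * B + 1/2) ^ 5 \<le> 6 ^ 5 * (t ^ 12 * B ^ 5)"
    using t B by (rule pow7_mult_pow5_le)
  have pow_powr: "(x ^ n) powr (a / 2) = x powr (n * a / 2)" if "0 < x" for x :: real and n
    using that by (simp add: powr_realpow[symmetric] powr_powr)
  define u v where "u = 2 * t" and "v = 2 * B + 1/2"
  have uv: "0 < u" "0 < v" "0 < \<epsilon> / v"
    using t B \<epsilon> by (auto simp: u_def v_def)
  have "d powr (7/2 * a) * E powr (-(5/2) * a) \<le> u powr (7/2 * a) * (\<epsilon> / v) powr (-(5/2) * a)"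
    using a d E uv by (intro mult_mono powr_mono2 powr_mono2') (auto simp: u_def v_def)
  also have "\<dots> = (u ^ 7 * v ^ 5) powr (a / 2) / \<epsilon> powr (5/2 * a)"
    using uv \<epsilon> by (simp add: powr_mult pow_powr powr_divide powr_minus_divide)
  also have "\<dots> \<le> (6 ^ 5 * (t ^ 12 * B ^ 5)) powr (a / 2) / \<epsilon> powr (5/2 * a)"
    using key uv a by (intro divide_right_mono powr_mono2) (auto simp: u_def v_def)
  also have "\<dots> = 6 powr (5/2 * a) * t powr (6 * a) * B powr (5/2 * a) * \<epsilon> powr (-(5/2) * a)"
    using t B \<epsilon> pow_powr[of 6 5] by (simp add: powr_mult pow_powr powr_minus_divide)
  finally show ?thesis
    using \<gamma> by (simp add: a_def mult.assoc mult_left_mono)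
qed

lemma sum_shift_coeff_zero:
  fixes f v :: "'a::zero \<Rightarrow> real"
  assumes "finite I" "0 \<in> I"
  shows "(\<Sum>\<alpha>\<in>I. (f \<alpha> - (if \<alpha> = 0 then c else 0)) * v \<alpha>) = (\<Sum>\<alpha>\<in>I. f \<alpha> * v \<alpha>) - c * v 0"
proof -
  have "(\<Sum>\<alpha>\<in>I. (f \<alpha> - (if \<alpha> = 0 then c else 0)) * v \<alpha>)
      = (\<Sum>\<alpha>\<in>I. f \<alpha> * v \<alpha> - (if \<alpha> = 0 then c * v \<alpha> else 0))"
    by (intro sum.cong) (auto simp: left_diff_distrib)
  also have "\<dots> = (\<Sum>\<alpha>\<in>I. f \<alpha> * v \<alpha>) - c * v 0"
    using assms by (simp add: sum_subtractf sum.delta)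
  finally show ?thesis .
qed

lemma exists_shifted_poly:
  fixes gs :: "'n::finite rpoly list" and I :: "('n \<Rightarrow>\<^sub>0 nat) set"
  assumes Sne: "semialg gs \<noteq> {}" and S_cube: "semialg gs \<subseteq> cube"
    and I: "finite I" "0 \<in> I" and eps: "0 < \<epsilon>" "\<epsilon> \<le> 1/2"
    and bound: "\<And>x. x \<in> cube \<Longrightarrow> \<bar>\<Sum>\<alpha>\<in>I. f \<alpha> * mon_eval \<alpha> x\<bar> \<le> B"
  defines "m \<equiv> INF x\<in>semialg gs. \<Sum>\<alpha>\<in>I. f \<alpha> * mon_eval \<alpha> x"
  obtains h :: "'n rpoly"
  where "Poly_Mapping.keys h \<subseteq> I" "\<epsilon> \<le> fstar gs h" "\<epsilon> / (2 * B + 1/2) \<le> epsf gs h"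
    and "\<And>L. apply_fun L h = (\<Sum>\<alpha>\<in>I. f \<alpha> * L \<alpha>) - (m - \<epsilon>) * L 0"
proof -
  define p where "p x = (\<Sum>\<alpha>\<in>I. f \<alpha> * mon_eval \<alpha> x)" for x
  have p_bound_S: "-B \<le> p x" "p x \<le> B" if "x \<in> semialg gs" for x
    using bound[of x] S_cube that by (auto simp: p_def abs_le_iff)
  have "bdd_below (p ` semialg gs)"
    using p_bound_S(1) by (intro bdd_belowI2[of _ "-B"])
  then have m_le: "m \<le> p x" if "x \<in> semialg gs" for x
    unfolding m_def p_def[symmetric] using that by (rule cINF_lower)
  have "\<bar>m\<bar> \<le> B"
  proof -
    obtain x0 where "x0 \<in> semialg gs"
      using Sne by blast
    then have "m \<le> B"
      using m_le p_bound_S(2) by (blast intro: order_trans)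
    moreover have "-B \<le> m"
      unfolding m_def p_def[symmetric] using Sne p_bound_S(1) by (rule cINF_greatest)
    ultimately show ?thesis
      by simp
  qed
  note shift = sum_shift_coeff_zero[OF I, of f "m - \<epsilon>"]
  obtain h :: "'n rpoly" where "Poly_Mapping.keys h \<subseteq> I"
    and peval_h: "\<And>x. peval h x = (\<Sum>\<alpha>\<in>I. (f \<alpha> - (if \<alpha> = 0 then m - \<epsilon> else 0)) * mon_eval \<alpha> x)"
    and L_h: "\<And>L. apply_fun L h = (\<Sum>\<alpha>\<in>I. (f \<alpha> - (if \<alpha> = 0 then m - \<epsilon> else 0)) * L \<alpha>)"
    using exists_poly_with_coeffs[OF I(1), of "\<lambda>\<alpha>. f \<alpha> - (if \<alpha> = 0 then m - \<epsilon> else 0)"]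
    by blast
  have peval_h_eq: "peval h x = p x - (m - \<epsilon>)" for x
    by (simp add: peval_h shift p_def)
  have "\<epsilon> \<le> fstar gs h"
    unfolding fstar_def using Sne m_le by (intro cINF_greatest) (auto simp: peval_h_eq)
  moreover have "\<bar>peval h x\<bar> \<le> 2 * B + 1/2" if "x \<in> cube" for x
    using bound[OF that] \<open>\<bar>m\<bar> \<le> B\<close> eps by (simp add: peval_h_eq p_def abs_le_iff)
  ultimately have "\<epsilon> / (2 * B + 1/2) \<le> epsf gs h"
    using S_cube Sne eps(1) by (intro epsf_ge) auto
  then show ?thesis
    using that \<open>Poly_Mapping.keys h \<subseteq> I\<close> \<open>\<epsilon> \<le> fstar gs h\<close> by (simp add: L_h shift)
qed

lemma pseudo_separation_margin_le:
  fixes gs :: "'n::finite rpoly list" and LL \<gamma> \<epsilon> e :: real and t l :: nat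
  assumes n2: "CARD('n) \<ge> 2"
    and Sne: "semialg gs \<noteq> {}" and S_cube: "semialg gs \<subseteq> cube"
    and LL: "0 < LL" and \<gamma>: "0 \<le> \<gamma>"
    and putinar: "\<forall>f::'n rpoly. \<forall>m::nat. fstar gs f > 0 \<longrightarrow>
        real m \<ge> \<gamma> * real (pdeg f) powr (7/2 * CARD('n) * LL) * epsf gs f powr (-(5/2) * CARD('n) * LL)
        \<longrightarrow> f \<in> quadmod m gs"
    and eps: "0 < \<epsilon>" "\<epsilon> \<le> 1/2" and t1: "1 \<le> t"
    and l_big: "real l \<ge> \<gamma> * 6 powr (5/2 * CARD('n) * LL) * real t powr (6 * CARD('n) * LL)
        * real ((CARD('n) + t) choose t) powr (5/2 * CARD('n) * LL) * \<epsilon> powr (-(5/2) * CARD('n) * LL)"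
    and L: "L \<in> pseudo gs l"
    and f: "(\<Sum>\<alpha>\<in>idx (2*t). (f \<alpha>)\<^sup>2) \<le> 1"
    and sep: "\<And>x. x \<in> semialg gs \<Longrightarrow>
      (\<Sum>\<alpha>\<in>idx (2*t). f \<alpha> * L \<alpha>) + e \<le> (\<Sum>\<alpha>\<in>idx (2*t). f \<alpha> * mon_eval \<alpha> x)"
  shows "e \<le> \<epsilon>"
proof -
  define I where "I = (idx (2*t) :: ('n \<Rightarrow>\<^sub>0 nat) set)"
  define B where "B = real ((CARD('n) + t) choose t)"
  have I: "finite I" "0 \<in> I"
    by (simp_all add: I_def finite_idx) (simp add: idx_def)
  have B: "3 \<le> B"
    using binomial_ge_Suc[OF t1, of "CARD('n)"] n2 unfolding B_def by linarith
  have "\<bar>\<Sum>\<alpha>\<in>I. f \<alpha> * mon_eval \<alpha> x\<bar> \<le> B" if "x \<in> cube" for x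
  proof -
    have "\<bar>\<Sum>\<alpha>\<in>I. f \<alpha> * mon_eval \<alpha> x\<bar> \<le> sqrt (card I)"
      using I(1) f[folded I_def] that by (rule abs_sum_coeffs_mon_eval_le)
    also have "\<dots> \<le> B"
      using card_idx_double_le[of t, where 'n = 'n] B by (simp add: I_def B_def real_sqrt_le_iff')
    finally show ?thesis .
  qed
  then obtain h :: "'n rpoly" where "Poly_Mapping.keys h \<subseteq> I" "\<epsilon> \<le> fstar gs h"
    "\<epsilon> / (2 * B + 1/2) \<le> epsf gs h"
    and L_h: "apply_fun L h = (\<Sum>\<alpha>\<in>I. f \<alpha> * L \<alpha>) - ((INF x\<in>semialg gs. \<Sum>\<alpha>\<in>I. f \<alpha> * mon_eval \<alpha> x) - \<epsilon>) * L 0"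
    using exists_shifted_poly[OF Sne S_cube I eps] by blast
  have "pdeg h \<le> 2 * t"
    using \<open>Poly_Mapping.keys h \<subseteq> I\<close> by (simp add: I_def keys_subset_idx_iff_pdeg_le)
  with \<open>\<epsilon> / (2 * B + 1/2) \<le> epsf gs h\<close>
  have "\<gamma> * real (pdeg h) powr (7/2 * CARD('n) * LL) * epsf gs h powr (-(5/2) * CARD('n) * LL)
      \<le> \<gamma> * 6 powr (5/2 * CARD('n) * LL) * real t powr (6 * real CARD('n) * LL) * B powr (5/2 * CARD('n) * LL)
        * \<epsilon> powr (-(5/2) * CARD('n) * LL)"
    using LL \<gamma> eps(1) t1 B by (intro putinar_degree_bound_le) auto
  then have "\<gamma> * real (pdeg h) powr (7/2 * CARD('n) * LL) * epsf gs h powr (-(5/2) * CARD('n) * LL) \<le> real l"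
    using l_big unfolding B_def of_nat_mult of_nat_numeral by linarith
  moreover have "0 < fstar gs h"
    using \<open>\<epsilon> \<le> fstar gs h\<close> eps(1) by linarith
  ultimately have "h \<in> quadmod l gs"
    using putinar by blast
  then have "0 \<le> apply_fun L h"
    using L by (simp add: pseudo_def)
  moreover have "(\<Sum>\<alpha>\<in>I. f \<alpha> * L \<alpha>) + e \<le> (INF x\<in>semialg gs. \<Sum>\<alpha>\<in>I. f \<alpha> * mon_eval \<alpha> x)"
    using Sne sep by (intro cINF_greatest) (auto simp: I_def)
  moreover have "L 0 = 1"
    using L by (simp add: pseudo_def)
  ultimately show "e \<le> \<epsilon>"
    unfolding L_h by simp
qed

lemma excess_truncv_pseudo_moments_le:
  fixes gs :: "'n::finite rpoly list" and LL \<gamma> \<epsilon> :: real and t l :: nat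
  assumes n2: "CARD('n) \<ge> 2"
    and Sne: "semialg gs \<noteq> {}" and arch: "1 - sqnormX \<in> quadmod l0 gs"
    and LL: "0 < LL" and \<gamma>: "0 \<le> \<gamma>"
    and putinar: "\<forall>f::'n rpoly. \<forall>m::nat. fstar gs f > 0 \<longrightarrow>
        real m \<ge> \<gamma> * real (pdeg f) powr (7/2 * CARD('n) * LL) * epsf gs f powr (-(5/2) * CARD('n) * LL)
        \<longrightarrow> f \<in> quadmod m gs"
    and eps: "0 < \<epsilon>" "\<epsilon> \<le> 1/2" and t1: "1 \<le> t"
    and l_big: "real l \<ge> \<gamma> * 6 powr (5/2 * CARD('n) * LL) * real t powr (6 * CARD('n) * LL)
        * real ((CARD('n) + t) choose t) powr (5/2 * CARD('n) * LL) * \<epsilon> powr (-(5/2) * CARD('n) * LL)"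
  shows "(SUP b\<in>truncv (2*t) ` pseudo gs l. INF a\<in>moments gs (2*t). ereal (vdist (2*t) b a)) \<le> ereal \<epsilon>"
proof (rule SUP_least, rule ccontr)
  have S_cube: "semialg gs \<subseteq> cube"
    using arch by (rule semialg_subset_cube)
  fix b assume "b \<in> truncv (2*t) ` pseudo gs l"
  then obtain L where L: "L \<in> pseudo gs l" and b: "b = truncv (2*t) L"
    by blast
  assume "\<not> (INF a\<in>moments gs (2*t). ereal (vdist (2*t) b a)) \<le> ereal \<epsilon>"
  then have "ereal \<epsilon> < (INF a\<in>moments gs (2*t). ereal (vdist (2*t) b a))"
    by (simp add: not_le)
  then obtain f e where "\<epsilon> < e" "(\<Sum>\<alpha>\<in>idx (2*t). (f \<alpha>)\<^sup>2) = 1"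
    and "\<And>x. x \<in> semialg gs \<Longrightarrow>
      (\<Sum>\<alpha>\<in>idx (2*t). f \<alpha> * b \<alpha>) + e \<le> (\<Sum>\<alpha>\<in>idx (2*t). f \<alpha> * mon_eval \<alpha> x)"
    using far_from_moments_separated[OF Sne S_cube less_imp_le[OF eps(1)]] by blast
  moreover have "(\<Sum>\<alpha>\<in>idx (2*t). f \<alpha> * b \<alpha>) = (\<Sum>\<alpha>\<in>idx (2*t). f \<alpha> * L \<alpha>)"
    unfolding b truncv_def by (intro sum.cong) (auto simp: idx_def)
  ultimately have "e \<le> \<epsilon>"
    using pseudo_separation_margin_le[OF n2 Sne S_cube LL \<gamma> putinar eps t1 l_big L, of f e] by simp
  with \<open>\<epsilon> < e\<close> show False
    by simp
qed

theorem mainTheorem2: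
  fixes gs :: "'n::finite rpoly list"
    and l0 :: nat and c LL \<gamma> \<epsilon> :: real and t l :: nat
  assumes n2: "CARD('n) \<ge> 2"
    and Sne: "semialg gs \<noteq> {}"
    and gnorm: "\<forall>g\<in>set gs. supnorm g \<le> 1/2"
    and arch: "1 - sqnormX \<in> quadmod l0 gs"
    and c1: "c \<ge> 1" and LL1: "LL \<ge> 1"
    and loj: "\<forall>x\<in>cube. Dfun gs x powr LL \<le> c * Gfun gs x"
    and gam1: "\<gamma> \<ge> 1"
    and putinar: "\<forall>f::'n rpoly. \<forall>m::nat. fstar gs f > 0 \<longrightarrow>
        real m \<ge> \<gamma> * real (pdeg f) powr (7/2 * CARD('n) * LL) * epsf gs f powr (-(5/2) * CARD('n) * LL)
        \<longrightarrow> f \<in> quadmod m gs"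
    and eps: "0 < \<epsilon>" "\<epsilon> \<le> 1/2"
    and t1: "t \<ge> 1"
    and l_big: "real l \<ge> \<gamma> * 6 powr (5/2 * CARD('n) * LL) * real t powr (6 * CARD('n) * LL)
        * real ((CARD('n) + t) choose t) powr (5/2 * CARD('n) * LL) * \<epsilon> powr (-(5/2) * CARD('n) * LL)"
    and l_big2: "l \<ge> 2 * t + l0"
  shows "hausd (2*t) (moments gs (2*t)) (truncv (2*t) ` pseudo gs l) \<le> ereal \<epsilon>"
proof -
  have "(SUP a\<in>moments gs (2*t). INF b\<in>truncv (2*t) ` pseudo gs l. ereal (vdist (2*t) a b)) \<le> ereal \<epsilon>"
  proof -
    have "(SUP a\<in>moments gs (2*t). INF b\<in>truncv (2*t) ` pseudo gs l. ereal (vdist (2*t) a b)) \<le> 0"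
      using l_big2 by (intro excess_moments_truncv_pseudo_le_0[OF arch]) simp
    also have "\<dots> \<le> ereal \<epsilon>"
      using eps(1) by simp
    finally show ?thesis .
  qed
  moreover have "(SUP b\<in>truncv (2*t) ` pseudo gs l. INF a\<in>moments gs (2*t). ereal (vdist (2*t) b a)) \<le> ereal \<epsilon>"
    using LL1 gam1 by (intro excess_truncv_pseudo_moments_le[OF n2 Sne arch _ _ putinar eps t1 l_big]) auto
  ultimately show ?thesis
    unfolding hausd_def by (rule max.boundedI)
qed

end
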